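(* Let $H=(V,E)$ be an $n$-vertex undirected multigraph without self-loops and with minimum degree at least $3$. Let $\gamma\ge 1$, let $\Sigma$ be a set, and suppose each edge $e\in E$ is assigned a set $w_e\subseteq\Sigma$ with $|w_e|\le\gamma$, such that every element of $\Sigma$ belongs to at most $\gamma$ of the sets $w_e$. Let $\beta=\lceil\log_{3/2}(12\gamma^2)\rceil$. Then there exist a subgraph $H_0=(V_0,E_0)$ of $H$ and a path decomposition $(B_i)_{i=1}^q$ of $H_0$ of width at most $4(\beta+3)$ such that: (a) $|E_0|=|V_0|+1$; (b) $|V_0|\le 4(\log_{3/2}n+2)$; (c) for every pair of edges $e_1,e_2\in E_0$ with $w_{e_1}\cap w_{e_2}\neq\emptyset$ there is an index $i$ such that all endpoints of $e_1$ and of $e_2$ lie in $B_i$; (d) for every edge $uv\in E_0$ the set of indices $\{i: u,v\in B_i\}$ is an interval.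
   Context: A path decomposition of a graph $G$ is a sequence of vertex subsets (bags) $B_1,\dots,B_q$ whose union is $V(G)$, such that every edge has both endpoints in some bag and, for each vertex $v$, the indices of bags containing $v$ form an interval; its width is the maximum bag size minus one. Parallel edges are allowed in $H$. *)

theory Defs
  imports Complex_Main
begin

text \<open>A finite loopless multigraph: vertex set V, a set E of edge identifiers, and an
  endpoint map ends assigning each edge a 2-element set of vertices (so parallel edges are
  allowed but self-loops are not).\<close>
definition multigraph :: "'v set \<Rightarrow> 'e set \<Rightarrow> ('e \<Rightarrow> 'v set) \<Rightarrow> bool" where
  "multigraph V E ends \<longleftrightarrow> finite V \<and> finite E \<and>
     (\<forall>e\<in>E. ends e \<subseteq> V \<and> card (ends e) = 2)"

definition degree :: "'e set \<Rightarrow> ('e \<Rightarrow> 'v set) \<Rightarrow> 'v \<Rightarrow> nat" where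
  "degree E ends v = card {e\<in>E. v \<in> ends e}"

definition subgraph :: "'v set \<Rightarrow> 'e set \<Rightarrow> 'v set \<Rightarrow> 'e set \<Rightarrow> ('e \<Rightarrow> 'v set) \<Rightarrow> bool" where
  "subgraph V0 E0 V E ends \<longleftrightarrow> V0 \<subseteq> V \<and> E0 \<subseteq> E \<and> (\<forall>e\<in>E0. ends e \<subseteq> V0)"

definition nat_interval :: "nat set \<Rightarrow> bool" where
  "nat_interval S \<longleftrightarrow> (\<forall>i j k. i \<in> S \<longrightarrow> k \<in> S \<longrightarrow> i \<le> j \<longrightarrow> j \<le> k \<longrightarrow> j \<in> S)"

text \<open>Path decomposition given as a list of bags B!0,...,B!(q-1), q = length B.\<close>
definition path_decomposition :: "'v set \<Rightarrow> 'e set \<Rightarrow> ('e \<Rightarrow> 'v set) \<Rightarrow> 'v set list \<Rightarrow> bool" where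
  "path_decomposition V E ends B \<longleftrightarrow>
     (\<Union> (set B)) = V \<and>
     (\<forall>e\<in>E. \<exists>i<length B. ends e \<subseteq> B ! i) \<and>
     (\<forall>v\<in>V. nat_interval {i. i < length B \<and> v \<in> B ! i})"

definition pd_width :: "'v set list \<Rightarrow> nat" where
  "pd_width B = Max (insert 0 (card ` set B)) - 1"

end

theory Submission
  imports Defs
begin

text \<open>Explore the graph breadth-first from a root v, but refuse an edge whose label set meets
  that of an edge explored \<beta> rounds earlier. While the explored edges do not outnumber the
  reached vertices, minimum degree 3 makes the reached set grow by a factor 3/2 per round (the
  refused edges are few since 4 \<gamma>^2 \<le> (3/2)^\<beta>), so after about log_(3/2) n rounds there are two
  explored edges outside the BFS tree. They and the tree paths from their endpoints to v form a
  subgraph with one more edge than vertices. Its bags are windows of \<beta> + 2 consecutive depths: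
  a tree path meets a window in at most \<beta> + 2 vertices, and edges with intersecting label sets
  were explored at most \<beta> rounds apart, so their endpoints share a window.\<close>

lemma sum_degree_eq_sum_card_ends_Int:
  assumes "finite E" "finite B"
  shows "(\<Sum>x\<in>B. degree E ends x) = (\<Sum>e\<in>E. card (ends e \<inter> B))"
proof -
  have "(\<Sum>x\<in>B. degree E ends x) = (\<Sum>x\<in>B. \<Sum>e\<in>E. if x \<in> ends e then 1 else 0)"
    unfolding degree_def using assms(1) by (simp add: sum.If_cases Int_def)
  also have "\<dots> = (\<Sum>e\<in>E. \<Sum>x\<in>B. if x \<in> ends e then 1 else 0)"
    by (rule sum.swap)
  also have "\<dots> = (\<Sum>e\<in>E. card (ends e \<inter> B))"
    using assms(2) by (simp add: sum.If_cases Int_def conj_commute)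
  finally show ?thesis .
qed

lemma sum_card_ends_Int_plus_card_new_le:
  assumes "finite A" "\<forall>e\<in>A. finite (ends e) \<and> card (ends e) = 2"
  shows "(\<Sum>e\<in>A. card (ends e \<inter> B)) + card (\<Union> (ends ` A) - B) \<le> 2 * card A"
proof -
  have "\<Union> (ends ` A) - B = (\<Union>e\<in>A. ends e - B)" by blast
  then have "card (\<Union> (ends ` A) - B) = card (\<Union>e\<in>A. ends e - B)" by simp
  also have "\<dots> \<le> (\<Sum>e\<in>A. card (ends e - B))" using assms(1) by (rule card_UN_le)
  finally have "(\<Sum>e\<in>A. card (ends e \<inter> B)) + card (\<Union> (ends ` A) - B)
      \<le> (\<Sum>e\<in>A. card (ends e \<inter> B) + card (ends e - B))"
    by (simp add: sum.distrib)
  also have "\<dots> = (\<Sum>e\<in>A. 2)"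
    using assms(2) by (intro sum.cong refl) (metis card_Int_Diff)
  finally show ?thesis by simp
qed

lemma card_conflicting_le:
  assumes "finite E" "finite A"
    and "\<forall>e\<in>A. w e \<subseteq> \<Sigma> \<and> finite (w e) \<and> card (w e) \<le> \<gamma>"
    and "\<forall>x\<in>\<Sigma>. card {e\<in>E. x \<in> w e} \<le> \<gamma>"
  shows "card {e\<in>E. \<exists>e'\<in>A. w e \<inter> w e' \<noteq> {}} \<le> \<gamma> * \<gamma> * card A"
proof -
  have "{e\<in>E. \<exists>e'\<in>A. w e \<inter> w e' \<noteq> {}} = (\<Union>e'\<in>A. \<Union>x\<in>w e'. {e\<in>E. x \<in> w e})"
    by blast
  also have "card \<dots> \<le> (\<Sum>e'\<in>A. card (\<Union>x\<in>w e'. {e\<in>E. x \<in> w e}))"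
    using assms(2) by (rule card_UN_le)
  also have "\<dots> \<le> (\<Sum>e'\<in>A. \<Sum>x\<in>w e'. card {e\<in>E. x \<in> w e})"
    using assms(3) by (intro sum_mono card_UN_le) blast
  also have "\<dots> \<le> (\<Sum>e'\<in>A. card (w e') * \<gamma>)"
  proof (intro sum_mono)
    fix e' assume "e' \<in> A"
    then have "\<forall>x\<in>w e'. card {e\<in>E. x \<in> w e} \<le> \<gamma>" using assms(3,4) by blast
    then have "(\<Sum>x\<in>w e'. card {e\<in>E. x \<in> w e}) \<le> (\<Sum>x\<in>w e'. \<gamma>)"
      by (intro sum_mono) blast
    then show "(\<Sum>x\<in>w e'. card {e\<in>E. x \<in> w e}) \<le> card (w e') * \<gamma>" by simp
  qed
  also have "\<dots> \<le> (\<Sum>e'\<in>A. \<gamma> * \<gamma>)"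
    using assms(3) by (intro sum_mono) simp
  finally show ?thesis by (simp add: mult.commute)
qed

lemma nat_ceiling_log:
  fixes b x :: real
  assumes "b > 1" "x \<ge> 1"
  shows "x \<le> b ^ nat \<lceil>log b x\<rceil>" "real (nat \<lceil>log b x\<rceil>) = \<lceil>log b x\<rceil>"
proof -
  have "log b x \<ge> 0" using assms by simp
  then show "real (nat \<lceil>log b x\<rceil>) = \<lceil>log b x\<rceil>" by simp
  have "x = b powr log b x" using assms by simp
  also have "\<dots> \<le> b powr real (nat \<lceil>log b x\<rceil>)"
    using assms \<open>log b x \<ge> 0\<close> by (intro powr_mono) linarith+
  also have "\<dots> = b ^ nat \<lceil>log b x\<rceil>" using assms by (intro powr_realpow) simp
  finally show "x \<le> b ^ nat \<lceil>log b x\<rceil>" .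
qed

section \<open>Path decompositions from depth windows\<close>

lemma pd_width_le:
  assumes "\<forall>b\<in>set B. card b \<le> m"
  shows "pd_width B \<le> m"
proof -
  have "Max (insert 0 (card ` set B)) \<le> m" using assms by (subst Max_le_iff) auto
  then show ?thesis unfolding pd_width_def by linarith
qed

definition window_bags :: "('a \<Rightarrow> nat) \<Rightarrow> 'a set \<Rightarrow> nat \<Rightarrow> nat \<Rightarrow> 'a set list" where
  "window_bags f U k n = map (\<lambda>d. {u\<in>U. d \<le> f u \<and> f u \<le> d + k}) [0..<n]"

lemma length_window_bags [simp]: "length (window_bags f U k n) = n"
  by (simp add: window_bags_def)

lemma nth_window_bags [simp]:
  "d < n \<Longrightarrow> window_bags f U k n ! d = {u\<in>U. d \<le> f u \<and> f u \<le> d + k}"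
  by (simp add: window_bags_def del: upt_Suc)

lemma nat_interval_window_bags:
  "nat_interval {i. i < n \<and> S \<subseteq> window_bags f U k n ! i}"
  unfolding nat_interval_def by auto

lemma window_bags_cover:
  assumes "finite S" "S \<noteq> {}" "S \<subseteq> U" "\<forall>u\<in>U. f u < n"
    and "\<forall>u\<in>S. \<forall>u'\<in>S. f u \<le> f u' + k"
  shows "\<exists>i<n. S \<subseteq> window_bags f U k n ! i"
proof -
  obtain u0 where u0: "u0 \<in> S" "f u0 = Min (f ` S)"
    using assms(1,2) by (metis (no_types, lifting) Min_in finite_imageI image_iff image_is_empty)
  have "\<forall>u\<in>S. f u0 \<le> f u" using u0 assms(1) by simp
  moreover have "f u0 < n" using u0 assms(3,4) by blast
  ultimately show ?thesis
    using assms(3,5) u0(1) by (intro exI[of _ "f u0"]) (auto simp del: u0(2))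
qed

lemma Union_window_bags:
  assumes "\<forall>u\<in>U. f u < n"
  shows "\<Union> (set (window_bags f U k n)) = U"
  using assms by (force simp: window_bags_def)

section \<open>Breadth-first exploration avoiding label conflicts\<close>

fun explored_edges :: "'e set \<Rightarrow> ('e \<Rightarrow> 'v set) \<Rightarrow> ('e \<Rightarrow> 's set) \<Rightarrow> 'v \<Rightarrow> nat \<Rightarrow> nat \<Rightarrow> 'e set"
  where
    "explored_edges E ends w v \<beta> 0 = {}"
  | "explored_edges E ends w v \<beta> (Suc r) = explored_edges E ends w v \<beta> r \<union>
       {e\<in>E. ends e \<inter> insert v (\<Union> (ends ` explored_edges E ends w v \<beta> r)) \<noteq> {} \<and>
             (\<forall>e'\<in>explored_edges E ends w v \<beta> (r - \<beta>). w e \<inter> w e' = {})}"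

locale conflict_bfs =
  fixes V :: "'v set" and E :: "'e set" and ends :: "'e \<Rightarrow> 'v set"
    and \<Sigma> :: "'s set" and w :: "'e \<Rightarrow> 's set" and \<gamma> :: nat and v :: 'v and \<beta> :: nat
  assumes multigraph: "multigraph V E ends"
    and root: "v \<in> V"
    and min_degree: "\<forall>u\<in>V. degree E ends u \<ge> 3"
    and labels: "\<forall>e\<in>E. w e \<subseteq> \<Sigma> \<and> finite (w e) \<and> card (w e) \<le> \<gamma>"
    and label_load: "\<forall>x\<in>\<Sigma>. card {e\<in>E. x \<in> w e} \<le> \<gamma>"
    and delay: "4 * real \<gamma> ^ 2 \<le> (3/2) ^ \<beta>"
begin

lemma finite_V: "finite V" and finite_E: "finite E"
  and ends_subset: "e \<in> E \<Longrightarrow> ends e \<subseteq> V" and card_ends: "e \<in> E \<Longrightarrow> card (ends e) = 2"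
  using multigraph unfolding multigraph_def by auto

lemma finite_ends: "e \<in> E \<Longrightarrow> finite (ends e)"
  using card_ends card.infinite by fastforce

abbreviation explored :: "nat \<Rightarrow> 'e set" where
  "explored \<equiv> explored_edges E ends w v \<beta>"

definition reached :: "nat \<Rightarrow> 'v set" where
  "reached r = insert v (\<Union> (ends ` explored r))"

definition blocked :: "nat \<Rightarrow> 'e set" where
  "blocked r = {e\<in>E. \<exists>e'\<in>explored (r - \<beta>). w e \<inter> w e' \<noteq> {}}"

lemma explored_Suc:
  "explored (Suc r) = explored r \<union> {e\<in>E. ends e \<inter> reached r \<noteq> {} \<and> e \<notin> blocked r}"
  unfolding reached_def blocked_def by auto

declare explored_edges.simps(2) [simp del]

lemma explored_subset: "explored r \<subseteq> E"
  by (induction r) (auto simp: explored_Suc)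

lemma finite_explored: "finite (explored r)"
  using explored_subset finite_E finite_subset by blast

lemma explored_mono: "r \<le> s \<Longrightarrow> explored r \<subseteq> explored s"
  by (rule lift_Suc_mono_le[of explored]) (auto simp: explored_Suc)

lemma reached_mono: "r \<le> s \<Longrightarrow> reached r \<subseteq> reached s"
  using explored_mono unfolding reached_def by blast

lemma blocked_mono:
  assumes "r \<le> s"
  shows "blocked r \<subseteq> blocked s"
proof -
  have "explored (r - \<beta>) \<subseteq> explored (s - \<beta>)" using assms by (intro explored_mono diff_le_mono)
  then show ?thesis unfolding blocked_def by blast
qed

lemma reached_subset: "reached r \<subseteq> V"
  using explored_subset ends_subset root by (auto simp: reached_def)

lemma finite_reached: "finite (reached r)"
  using reached_subset finite_V finite_subset by blast

lemma reached_0: "reached 0 = {v}"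
  by (simp add: reached_def)

lemma root_in_reached: "v \<in> reached r"
  by (simp add: reached_def)

lemma ends_subset_reached: "e \<in> explored r \<Longrightarrow> ends e \<subseteq> reached r"
  by (auto simp: reached_def)

definition depth :: "'v \<Rightarrow> nat" where
  "depth u = (LEAST r. u \<in> reached r)"

lemma depth_le: "u \<in> reached s \<Longrightarrow> depth u \<le> s"
  unfolding depth_def by (rule Least_le)

lemma in_reached_depth: "u \<in> reached s \<Longrightarrow> u \<in> reached (depth u)"
  unfolding depth_def by (rule LeastI)

lemma in_reached_iff: "u \<in> reached s \<Longrightarrow> u \<in> reached t \<longleftrightarrow> depth u \<le> t"
  using depth_le in_reached_depth reached_mono by blast

lemma depth_root: "depth v = 0"
  using depth_le[OF root_in_reached[of 0]] by simp

lemma depth_eq_0_iff: "u \<in> reached s \<Longrightarrow> depth u = 0 \<longleftrightarrow> u = v"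
  using in_reached_depth reached_0 depth_root by fastforce

definition level :: "'e \<Rightarrow> nat" where
  "level e = (LEAST s. e \<in> explored s)"

lemma level:
  assumes "e \<in> explored s"
  shows "e \<in> explored (level e)" "level e \<le> s" "level e \<ge> 1" "e \<notin> explored (level e - 1)"
proof -
  show e: "e \<in> explored (level e)" using assms unfolding level_def by (rule LeastI)
  show "level e \<le> s" using assms unfolding level_def by (rule Least_le)
  show pos: "level e \<ge> 1" using e by (cases "level e") auto
  show "e \<notin> explored (level e - 1)"
    using pos not_less_Least[of "level e - 1" "\<lambda>s. e \<in> explored s"]
    unfolding level_def[symmetric] by auto
qed

lemma level_eq:
  assumes "e \<in> explored (Suc r)" "e \<notin> explored r"
  shows "level e = Suc r"
proof -
  have "\<not> level e \<le> r" using level(1)[OF assms(1)] explored_mono assms(2) by blast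
  then show ?thesis using level(2)[OF assms(1)] by simp
qed

lemma level_ends:
  assumes "e \<in> explored s"
  shows "\<forall>u\<in>ends e. depth u \<le> level e \<and> level e \<le> Suc (depth u)"
    and "\<exists>u\<in>ends e. Suc (depth u) = level e"
proof -
  obtain r where r: "level e = Suc r" using level(3)[OF assms] by (cases "level e") auto
  have new: "e \<in> explored (Suc r)" "e \<notin> explored r" using level[OF assms] r by auto
  then have "ends e \<inter> reached r \<noteq> {}" "e \<notin> blocked r" by (auto simp: explored_Suc)
  have ge: "r \<le> depth u" if u: "u \<in> ends e" for u
  proof (cases r)
    case (Suc r')
    have "ends e \<inter> reached r' = {}"
    proof (rule ccontr)
      assume "ends e \<inter> reached r' \<noteq> {}"
      moreover have "e \<notin> blocked r'" using \<open>e \<notin> blocked r\<close> blocked_mono[of r' r] Suc by auto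
      ultimately have "e \<in> explored r"
        using explored_subset new(1) Suc by (auto simp: explored_Suc)
      then show False using new(2) by simp
    qed
    then have "u \<notin> reached r'" using u by auto
    moreover have "u \<in> reached (Suc r)" using ends_subset_reached[OF new(1)] u by auto
    ultimately show ?thesis using in_reached_iff Suc by fastforce
  qed simp
  show "\<forall>u\<in>ends e. depth u \<le> level e \<and> level e \<le> Suc (depth u)"
    using ge ends_subset_reached[OF new(1)] depth_le r by fastforce
  obtain u where "u \<in> ends e" "u \<in> reached r" using \<open>ends e \<inter> reached r \<noteq> {}\<close> by auto
  then show "\<exists>u\<in>ends e. Suc (depth u) = level e" using ge depth_le r by force
qed

lemma level_conflict:
  assumes "e1 \<in> explored s" "e2 \<in> explored s" "w e1 \<inter> w e2 \<noteq> {}"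
  shows "level e1 \<le> level e2 + \<beta>"
proof (rule ccontr)
  assume "\<not> ?thesis"
  then obtain r where r: "level e1 = Suc r" and "level e2 \<le> r - \<beta>" by (cases "level e1") auto
  then have "e2 \<in> explored (r - \<beta>)" using explored_mono level(1)[OF assms(2)] by blast
  then have "e1 \<in> blocked r" using assms explored_subset unfolding blocked_def by blast
  moreover have "e1 \<in> explored (Suc r)" "e1 \<notin> explored r" using level[OF assms(1)] r by auto
  ultimately show False by (auto simp: explored_Suc)
qed

lemma card_blocked_le: "card (blocked r) \<le> \<gamma> * \<gamma> * card (explored (r - \<beta>))"
  unfolding blocked_def
  by (rule card_conflicting_le[OF finite_E finite_explored, where \<Sigma> = \<Sigma>])
    (use labels label_load explored_subset in blast)+

lemma sum_card_ends_Int_unexplored_le: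
  "(\<Sum>e\<in>E - explored (Suc r). card (ends e \<inter> reached r)) \<le> 2 * card (blocked r)"
proof -
  let ?touch = "\<lambda>e. card (ends e \<inter> reached r)"
  have "(\<Sum>e\<in>E - explored (Suc r). ?touch e) = (\<Sum>e\<in>(E - explored (Suc r)) \<inter> blocked r. ?touch e)"
    by (rule sum.mono_neutral_right) (auto simp: finite_E explored_Suc)
  also have "\<dots> \<le> (\<Sum>e\<in>blocked r. ?touch e)"
    by (rule sum_mono2) (auto simp: blocked_def finite_E)
  also have "\<dots> \<le> (\<Sum>e\<in>blocked r. 2)"
  proof (rule sum_mono)
    fix e assume "e \<in> blocked r"
    then have "e \<in> E" by (simp add: blocked_def)
    then show "?touch e \<le> 2" using card_ends finite_ends card_mono[of "ends e" "ends e \<inter> reached r"]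
      by fastforce
  qed
  finally show ?thesis by simp
qed

text \<open>Double counting the edges at reached r: each vertex has degree at least 3, an edge not
  explored in the next round touches reached r only if it is blocked, and an explored edge
  contributes its endpoints outside reached r to reached (Suc r).\<close>
lemma reached_Suc_card_ge:
  assumes "card (explored (Suc r)) \<le> card (reached (Suc r))"
  shows "2 * card (reached r) \<le> card (reached (Suc r)) + 2 * card (blocked r)"
proof -
  let ?B = "reached r" and ?F = "explored (Suc r)"
  let ?touch = "\<lambda>e. card (ends e \<inter> ?B)" and ?new = "\<Union> (ends ` ?F) - ?B"
  have "(\<Sum>x\<in>?B. 3) \<le> (\<Sum>x\<in>?B. degree E ends x)"
    by (rule sum_mono) (use min_degree reached_subset in blast)
  then have "3 * card ?B \<le> (\<Sum>x\<in>?B. degree E ends x)" by simp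
  also have "\<dots> = (\<Sum>e\<in>E. ?touch e)"
    by (rule sum_degree_eq_sum_card_ends_Int[OF finite_E finite_reached])
  also have "\<dots> = (\<Sum>e\<in>?F. ?touch e) + (\<Sum>e\<in>E - ?F. ?touch e)"
    using sum.subset_diff[OF explored_subset[of "Suc r"] finite_E] by (simp add: add.commute)
  finally have touch: "3 * card ?B \<le> (\<Sum>e\<in>?F. ?touch e) + 2 * card (blocked r)"
    using sum_card_ends_Int_unexplored_le[of r] by linarith
  have endpoints: "(\<Sum>e\<in>?F. ?touch e) + card ?new \<le> 2 * card ?F"
    by (rule sum_card_ends_Int_plus_card_new_le)
      (use finite_explored explored_subset finite_ends card_ends in blast)+
  have "finite (\<Union> (ends ` ?F))" using finite_explored explored_subset finite_ends by blast
  have "card (reached (Suc r)) \<le> card (?B \<union> ?new)"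
    by (rule card_mono) (simp add: finite_reached \<open>finite (\<Union> (ends ` ?F))\<close>, auto simp: reached_def)
  also have "\<dots> \<le> card ?B + card ?new" by (rule card_Un_le)
  finally have "card (reached (Suc r)) \<le> card ?B + card ?new" .
  then show ?thesis using touch endpoints assms by linarith
qed

lemma reached_Suc_growth:
  assumes sparse: "\<forall>j\<le>Suc r. card (explored j) \<le> card (reached j)"
    and earlier: "\<beta> \<le> r \<Longrightarrow> (3/2) ^ \<beta> * real (card (reached (r - \<beta>))) \<le> real (card (reached r))"
  shows "(3/2) * real (card (reached r)) \<le> real (card (reached (Suc r)))"
proof -
  have "4 * real (card (blocked r)) \<le> real (card (reached r))"
  proof (cases "\<beta> \<le> r")
    case True
    have "card (explored (r - \<beta>)) \<le> card (reached (r - \<beta>))" using sparse by simp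
    then have "card (blocked r) \<le> \<gamma> * \<gamma> * card (reached (r - \<beta>))"
      using card_blocked_le[of r] by (meson le_trans mult_le_mono2)
    then have "4 * real (card (blocked r)) \<le> 4 * real \<gamma> ^ 2 * real (card (reached (r - \<beta>)))"
      by (simp add: power2_eq_square flip: of_nat_mult of_nat_le_iff)
    also have "\<dots> \<le> (3/2) ^ \<beta> * real (card (reached (r - \<beta>)))"
      by (rule mult_right_mono[OF delay]) simp
    also have "\<dots> \<le> real (card (reached r))" using earlier True .
    finally show ?thesis .
  next
    case False
    then show ?thesis using card_blocked_le[of r] by simp
  qed
  moreover have "2 * card (reached r) \<le> card (reached (Suc r)) + 2 * card (blocked r)"
    using reached_Suc_card_ge sparse by blast
  ultimately show ?thesis by linarith
qed

lemma reached_growth: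
  assumes "\<forall>j\<le>N. card (explored j) \<le> card (reached j)" "i \<le> j" "j \<le> N"
  shows "(3/2) ^ (j - i) * real (card (reached i)) \<le> real (card (reached j))"
  using assms(2,3)
proof (induction j arbitrary: i)
  case (Suc r)
  have IH: "\<And>i. i \<le> r \<Longrightarrow> (3/2) ^ (r - i) * real (card (reached i)) \<le> real (card (reached r))"
    using Suc.IH Suc.prems by simp
  have step: "(3/2) * real (card (reached r)) \<le> real (card (reached (Suc r)))"
    by (rule reached_Suc_growth) (use assms(1) Suc.prems IH[of "r - \<beta>"] in auto)
  show ?case
  proof (cases "i = Suc r")
    case False
    then have "i \<le> r" using Suc.prems by simp
    then have "(3/2) ^ (Suc r - i) * real (card (reached i))
        = (3/2) * ((3/2) ^ (r - i) * real (card (reached i)))"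
      by (simp add: Suc_diff_le)
    also have "\<dots> \<le> (3/2) * real (card (reached r))" using IH[OF \<open>i \<le> r\<close>] by (simp add: mult.commute)
    finally show ?thesis using step by simp
  qed simp
qed simp

lemma exists_overfull_round:
  obtains R where "card (reached (Suc R)) < card (explored (Suc R))" "(3/2) ^ R \<le> real (card V)"
proof -
  have bound: "(3/2) ^ N \<le> real (card V)"
    if "\<forall>j\<le>N. card (explored j) \<le> card (reached j)" for N
  proof -
    have "(3/2) ^ (N - 0) * real (card (reached 0)) \<le> real (card (reached N))"
      by (rule reached_growth[OF that]) auto
    moreover have "card (reached N) \<le> card V" by (rule card_mono[OF finite_V reached_subset])
    ultimately show ?thesis by (simp add: reached_0)
  qed
  obtain N :: nat where "real (card V) < (3/2) ^ N"
    using real_arch_pow[of "3/2" "real (card V)"] by auto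
  then have "\<exists>R. card (reached R) < card (explored R)"
    using bound[of N] by (meson not_le)
  then obtain R0 where R0: "card (reached R0) < card (explored R0)"
    and below: "\<forall>j<R0. card (explored j) \<le> card (reached j)"
    using exists_least_iff[of "\<lambda>R. card (reached R) < card (explored R)"] by (auto simp: not_less)
  obtain R where "R0 = Suc R" using R0 by (cases R0) auto
  then show ?thesis using that R0 below bound[of R] by simp
qed

section \<open>The exploration tree\<close>

definition parent_edge :: "'v \<Rightarrow> 'e" where
  "parent_edge u = (SOME e. e \<in> explored (depth u) \<and> e \<notin> explored (depth u - 1) \<and> u \<in> ends e)"

definition parent :: "'v \<Rightarrow> 'v" where
  "parent u = (SOME p. p \<in> ends (parent_edge u) \<and> p \<noteq> u)"

lemma parent_edge:
  assumes "u \<in> reached s" "u \<noteq> v"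
  shows "parent_edge u \<in> explored (depth u)" "level (parent_edge u) = depth u"
    "u \<in> ends (parent_edge u)"
proof -
  obtain r where r: "depth u = Suc r"
    using depth_eq_0_iff[OF assms(1)] assms(2) by (cases "depth u") auto
  have "u \<in> reached (Suc r)" "u \<notin> reached r" using in_reached_iff[OF assms(1)] r by auto
  then have "\<exists>e. e \<in> explored (depth u) \<and> e \<notin> explored (depth u - 1) \<and> u \<in> ends e"
    using assms(2) r unfolding reached_def by auto
  then have e: "parent_edge u \<in> explored (depth u) \<and> parent_edge u \<notin> explored (depth u - 1)
      \<and> u \<in> ends (parent_edge u)"
    unfolding parent_edge_def by (rule someI_ex)
  then show "parent_edge u \<in> explored (depth u)" "u \<in> ends (parent_edge u)" by auto
  show "level (parent_edge u) = depth u" using level_eq e r by simp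
qed

lemma parent:
  assumes "u \<in> reached s" "u \<noteq> v"
  shows "ends (parent_edge u) = {u, parent u}" "depth (parent u) = depth u - 1"
    "parent u \<in> reached s"
proof -
  note e = parent_edge[OF assms]
  have "parent_edge u \<in> E" using e(1) explored_subset by blast
  then obtain a b where ab: "ends (parent_edge u) = {a, b}" "a \<noteq> b"
    using card_ends by (meson card_2_iff)
  then have "\<exists>p. p \<in> ends (parent_edge u) \<and> p \<noteq> u" by blast
  then have p: "parent u \<in> ends (parent_edge u) \<and> parent u \<noteq> u"
    unfolding parent_def by (rule someI_ex)
  show ends: "ends (parent_edge u) = {u, parent u}" using ab p e(3) by auto
  obtain q where q: "q \<in> ends (parent_edge u)" "Suc (depth q) = level (parent_edge u)"
    using level_ends(2)[OF e(1)] by blast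
  then have "q = parent u" using e(2) ends by auto
  then show "depth (parent u) = depth u - 1" using q e(2) by simp
  have "parent u \<in> reached (depth u)" using ends_subset_reached[OF e(1)] p by blast
  then show "parent u \<in> reached s" using reached_mono[OF depth_le[OF assms(1)]] by blast
qed

lemma parent_iterate:
  assumes "u \<in> reached s" "i \<le> depth u"
  shows "(parent ^^ i) u \<in> reached s \<and> depth ((parent ^^ i) u) = depth u - i"
  using assms(2)
proof (induction i)
  case (Suc i)
  let ?y = "(parent ^^ i) u"
  have y: "?y \<in> reached s" "depth ?y = depth u - i" using Suc by auto
  then have "?y \<noteq> v" using Suc.prems depth_root by auto
  then show ?case using parent[OF y(1)] y Suc.prems by simp
qed (use assms(1) in simp)

lemma inj_on_parent_edge: "inj_on parent_edge (reached s - {v})"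
proof (rule inj_onI)
  fix x y assume x: "x \<in> reached s - {v}" and y: "y \<in> reached s - {v}"
    and eq: "parent_edge x = parent_edge y"
  have "{x, parent x} = {y, parent y}" using parent(1)[of x s] parent(1)[of y s] x y eq by simp
  then have "x = y \<or> x = parent y \<and> parent x = y" unfolding doubleton_eq_iff by blast
  moreover have "depth x \<noteq> 0" "depth y \<noteq> 0" using depth_eq_0_iff x y by auto
  moreover have "depth (parent x) = depth x - 1" "depth (parent y) = depth y - 1"
    using parent(2) x y by auto
  ultimately show "x = y" by auto
qed

lemma two_non_tree_edges:
  assumes "card (reached s) < card (explored s)"
  obtains f1 f2 where "f1 \<in> explored s - parent_edge ` (reached s - {v})"
    "f2 \<in> explored s - parent_edge ` (reached s - {v})" "f1 \<noteq> f2"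
proof -
  let ?T = "parent_edge ` (reached s - {v})"
  have "card ?T \<le> card (reached s) - 1"
    using card_image_le[of "reached s - {v}" parent_edge] finite_reached root_in_reached by simp
  moreover have "card (reached s) \<ge> 1"
    using finite_reached[of s] root_in_reached[of s] by (auto simp: Suc_le_eq card_gt_0_iff)
  ultimately have "Suc 1 \<le> card (explored s) - card ?T" using assms by linarith
  also have "\<dots> \<le> card (explored s - ?T)"
    by (rule diff_card_le_card_Diff) (simp add: finite_reached)
  finally have "Suc 1 \<le> card (explored s - ?T)" .
  then obtain f1 D where "explored s - ?T = insert f1 D" "f1 \<notin> D" "1 \<le> card D"
    unfolding card_le_Suc_iff by blast
  moreover obtain f2 where "f2 \<in> D" using \<open>1 \<le> card D\<close> by fastforce
  ultimately show ?thesis using that by blast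
qed

definition ancestors :: "'v \<Rightarrow> 'v set" where
  "ancestors x = (\<lambda>i. (parent ^^ i) x) ` {..depth x}"

lemma self_in_ancestors: "x \<in> ancestors x"
  unfolding ancestors_def by force

lemma ancestors_subset_reached: "x \<in> reached s \<Longrightarrow> ancestors x \<subseteq> reached s"
  unfolding ancestors_def using parent_iterate by auto

lemma root_in_ancestors:
  assumes "x \<in> reached s"
  shows "v \<in> ancestors x"
proof -
  have "(parent ^^ depth x) x \<in> reached s" "depth ((parent ^^ depth x) x) = 0"
    using parent_iterate[OF assms, of "depth x"] by simp_all
  then have "(parent ^^ depth x) x = v" using depth_eq_0_iff by blast
  then show ?thesis unfolding ancestors_def by force
qed

lemma parent_in_ancestors:
  assumes "x \<in> reached s" "y \<in> ancestors x" "y \<noteq> v"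
  shows "parent y \<in> ancestors x"
proof -
  obtain i where i: "i \<le> depth x" "y = (parent ^^ i) x"
    using assms(2) unfolding ancestors_def by auto
  then have "i \<noteq> depth x" using parent_iterate[OF assms(1) i(1)] depth_eq_0_iff assms(3) by auto
  then have "Suc i \<in> {..depth x}" using i(1) by simp
  moreover have "parent y = (parent ^^ Suc i) x" using i by simp
  ultimately show ?thesis unfolding ancestors_def by blast
qed

lemma card_ancestors_le: "card (ancestors x) \<le> Suc (depth x)"
  unfolding ancestors_def using card_image_le[of "{..depth x}" "\<lambda>i. (parent ^^ i) x"] by simp

lemma inj_on_depth_ancestors:
  assumes "x \<in> reached s"
  shows "inj_on depth (ancestors x)"
proof (rule inj_onI)
  fix y z assume "y \<in> ancestors x" "z \<in> ancestors x" "depth y = depth z"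
  then obtain i j where "i \<le> depth x" "j \<le> depth x" "y = (parent ^^ i) x" "z = (parent ^^ j) x"
    "depth x - i = depth x - j"
    using parent_iterate[OF assms] unfolding ancestors_def by auto
  then show "y = z" by (metis diff_diff_cancel)
qed

lemma card_ancestors_window_le:
  assumes "x \<in> reached s"
  shows "card {u\<in>ancestors x. d \<le> depth u \<and> depth u \<le> d + k} \<le> Suc k"
proof -
  have "card {u\<in>ancestors x. d \<le> depth u \<and> depth u \<le> d + k} \<le> card {d..d + k}"
    by (rule card_inj_on_le[OF inj_on_subset[OF inj_on_depth_ancestors[OF assms]]]) auto
  then show ?thesis by simp
qed

end

section \<open>The core subgraph\<close>

locale conflict_bfs_core = conflict_bfs V E ends \<Sigma> w \<gamma> v \<beta>
  for V :: "'v set" and E :: "'e set" and ends :: "'e \<Rightarrow> 'v set"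
    and \<Sigma> :: "'s set" and w :: "'e \<Rightarrow> 's set" and \<gamma> :: nat and v :: 'v and \<beta> :: nat +
  fixes N :: nat and f1 f2 :: 'e
  assumes non_tree: "{f1, f2} \<subseteq> explored N - parent_edge ` (reached N - {v})"
    and non_tree_distinct: "f1 \<noteq> f2"
begin

definition core_vertices :: "'v set" where
  "core_vertices = (\<Union>x\<in>ends f1 \<union> ends f2. ancestors x)"

definition core_edges :: "'e set" where
  "core_edges = parent_edge ` (core_vertices - {v}) \<union> {f1, f2}"

definition core_bags :: "'v set list" where
  "core_bags = window_bags depth core_vertices (Suc \<beta>) (Suc N)"

lemma non_tree_ends: "ends f1 \<union> ends f2 \<subseteq> reached N" "finite (ends f1 \<union> ends f2)"
  "card (ends f1 \<union> ends f2) \<le> 4" "ends f1 \<noteq> {}"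
proof -
  have "f1 \<in> E" "f2 \<in> E" using non_tree explored_subset by auto
  then show "finite (ends f1 \<union> ends f2)" using finite_ends by blast
  show "ends f1 \<noteq> {}" using card_ends[OF \<open>f1 \<in> E\<close>] by auto
  show "card (ends f1 \<union> ends f2) \<le> 4"
    using card_Un_le[of "ends f1" "ends f2"] card_ends \<open>f1 \<in> E\<close> \<open>f2 \<in> E\<close> by simp
  show "ends f1 \<union> ends f2 \<subseteq> reached N" using non_tree ends_subset_reached by blast
qed

lemma core_vertices_subset_reached: "core_vertices \<subseteq> reached N"
  unfolding core_vertices_def using non_tree_ends(1) ancestors_subset_reached by blast

lemma finite_core_vertices: "finite core_vertices"
  using core_vertices_subset_reached finite_reached finite_subset by blast

lemma root_in_core_vertices: "v \<in> core_vertices"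
  unfolding core_vertices_def using non_tree_ends(1,4) root_in_ancestors by blast

lemma depth_core_vertex: "u \<in> core_vertices \<Longrightarrow> depth u < Suc N"
  using core_vertices_subset_reached depth_le by fastforce

lemma core_edges_subset_explored: "core_edges \<subseteq> explored N"
proof -
  have "parent_edge u \<in> explored N" if "u \<in> core_vertices - {v}" for u
    using that parent_edge(1) core_vertices_subset_reached depth_le explored_mono by blast
  then show ?thesis unfolding core_edges_def using non_tree by blast
qed

lemma ends_core_edge:
  assumes "e \<in> core_edges"
  shows "ends e \<subseteq> core_vertices"
proof (cases "e \<in> {f1, f2}")
  case True
  then show ?thesis unfolding core_vertices_def using self_in_ancestors by blast
next
  case False
  then obtain u where u: "u \<in> core_vertices" "u \<noteq> v" "e = parent_edge u"
    using assms unfolding core_edges_def by blast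
  then obtain x where "x \<in> ends f1 \<union> ends f2" "u \<in> ancestors x"
    unfolding core_vertices_def by blast
  then have "parent u \<in> core_vertices"
    using parent_in_ancestors non_tree_ends(1) u(2) unfolding core_vertices_def by blast
  then show ?thesis using u parent(1) core_vertices_subset_reached by auto
qed

lemma core_subgraph: "subgraph core_vertices core_edges V E ends"
  unfolding subgraph_def
  using core_vertices_subset_reached reached_subset core_edges_subset_explored explored_subset
    ends_core_edge by blast

lemma card_core_edges: "card core_edges = card core_vertices + 1"
proof -
  let ?P = "parent_edge ` (core_vertices - {v})"
  have "card ?P = card (core_vertices - {v})"
    by (rule card_image[OF inj_on_subset[OF inj_on_parent_edge[of N]]])
      (use core_vertices_subset_reached in blast)
  then have "card ?P = card core_vertices - 1"
    using root_in_core_vertices finite_core_vertices by simp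
  moreover have "f1 \<notin> ?P" "f2 \<notin> ?P" using non_tree core_vertices_subset_reached by auto
  moreover have "card core_vertices \<ge> 1"
    using root_in_core_vertices finite_core_vertices by (auto simp: Suc_le_eq card_gt_0_iff)
  ultimately show ?thesis
    unfolding core_edges_def using non_tree_distinct finite_core_vertices by simp
qed

lemma card_core_vertices_le: "card core_vertices \<le> 4 * Suc N"
proof -
  have "card core_vertices \<le> (\<Sum>x\<in>ends f1 \<union> ends f2. card (ancestors x))"
    unfolding core_vertices_def by (rule card_UN_le[OF non_tree_ends(2)])
  also have "\<dots> \<le> (\<Sum>x\<in>ends f1 \<union> ends f2. Suc N)"
    using card_ancestors_le depth_le non_tree_ends(1) by (intro sum_mono) (meson Suc_le_mono le_trans subsetD)
  also have "\<dots> = card (ends f1 \<union> ends f2) * Suc N" by simp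
  also have "\<dots> \<le> 4 * Suc N" using non_tree_ends(3) by (rule mult_le_mono1)
  finally show ?thesis .
qed

lemma core_bag_cover:
  assumes "e1 \<in> core_edges" "e2 \<in> core_edges"
    and "level e1 \<le> level e2 + \<beta>" "level e2 \<le> level e1 + \<beta>"
  shows "\<exists>i<length core_bags. ends e1 \<union> ends e2 \<subseteq> core_bags ! i"
proof -
  have "e1 \<in> explored N" "e2 \<in> explored N" using assms core_edges_subset_explored by auto
  have "depth u \<le> depth u' + Suc \<beta>"
    if "u \<in> ends a" "u' \<in> ends b" "a \<in> {e1, e2}" "b \<in> {e1, e2}" for u u' a b
  proof -
    have "depth u \<le> level a" "level b \<le> Suc (depth u')"
      using that level_ends(1) \<open>e1 \<in> explored N\<close> \<open>e2 \<in> explored N\<close> by blast+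
    moreover have "level a \<le> level b + \<beta>" using that(3,4) assms(3,4) by auto
    ultimately show ?thesis by linarith
  qed
  then have "depth u \<le> depth u' + Suc \<beta>"
    if "u \<in> ends e1 \<union> ends e2" "u' \<in> ends e1 \<union> ends e2" for u u'
    using that by blast
  moreover have "e1 \<in> E" "e2 \<in> E"
    using \<open>e1 \<in> explored N\<close> \<open>e2 \<in> explored N\<close> explored_subset by auto
  then have "finite (ends e1 \<union> ends e2)" "ends e1 \<noteq> {}" using finite_ends card_ends[of e1] by auto
  ultimately show ?thesis
    unfolding core_bags_def length_window_bags
    using ends_core_edge[OF assms(1)] ends_core_edge[OF assms(2)] depth_core_vertex
    by (intro window_bags_cover) auto
qed

lemma path_decomposition_core_bags: "path_decomposition core_vertices core_edges ends core_bags"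
  unfolding path_decomposition_def
proof (intro conjI ballI)
  show "\<Union> (set core_bags) = core_vertices"
    unfolding core_bags_def by (rule Union_window_bags) (use depth_core_vertex in blast)
  show "\<exists>i<length core_bags. ends e \<subseteq> core_bags ! i" if "e \<in> core_edges" for e
    using core_bag_cover[OF that that] by simp
  show "nat_interval {i. i < length core_bags \<and> u \<in> core_bags ! i}" for u
    using nat_interval_window_bags[of "Suc N" "{u}"] by (simp add: core_bags_def)
qed

lemma pd_width_core_bags: "pd_width core_bags \<le> 4 * (\<beta> + 2)"
proof (rule pd_width_le, rule ballI)
  fix b assume "b \<in> set core_bags"
  then obtain d where b: "b = {u\<in>core_vertices. d \<le> depth u \<and> depth u \<le> d + Suc \<beta>}"
    unfolding core_bags_def window_bags_def by auto
  then have "b = (\<Union>x\<in>ends f1 \<union> ends f2. {u\<in>ancestors x. d \<le> depth u \<and> depth u \<le> d + Suc \<beta>})"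
    unfolding core_vertices_def by blast
  then have "card b \<le> (\<Sum>x\<in>ends f1 \<union> ends f2. card {u\<in>ancestors x. d \<le> depth u \<and> depth u \<le> d + Suc \<beta>})"
    using card_UN_le[OF non_tree_ends(2)] by simp
  also have "\<dots> \<le> (\<Sum>x\<in>ends f1 \<union> ends f2. Suc (Suc \<beta>))"
    using card_ancestors_window_le non_tree_ends(1) by (intro sum_mono) blast
  also have "\<dots> = card (ends f1 \<union> ends f2) * (\<beta> + 2)" by simp
  also have "\<dots> \<le> 4 * (\<beta> + 2)" using non_tree_ends(3) by (rule mult_le_mono1)
  finally show "card b \<le> 4 * (\<beta> + 2)" .
qed

lemma conflicting_core_edges_share_bag:
  assumes "e1 \<in> core_edges" "e2 \<in> core_edges" "w e1 \<inter> w e2 \<noteq> {}"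
  shows "\<exists>i<length core_bags. ends e1 \<union> ends e2 \<subseteq> core_bags ! i"
proof (rule core_bag_cover[OF assms(1,2)])
  have "e1 \<in> explored N" "e2 \<in> explored N" using assms core_edges_subset_explored by auto
  then show "level e1 \<le> level e2 + \<beta>" "level e2 \<le> level e1 + \<beta>"
    using level_conflict assms(3) by (metis inf_commute)+
qed

lemma nat_interval_core_bags: "nat_interval {i. i < length core_bags \<and> S \<subseteq> core_bags ! i}"
  unfolding core_bags_def length_window_bags by (rule nat_interval_window_bags)

end

context conflict_bfs
begin

theorem exists_core_subgraph:
  obtains V0 E0 B R where
    "subgraph V0 E0 V E ends" "path_decomposition V0 E0 ends B" "pd_width B \<le> 4 * (\<beta> + 2)"
    "card E0 = card V0 + 1" "(3/2) ^ R \<le> real (card V)" "card V0 \<le> 4 * R + 8"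
    "\<forall>e1\<in>E0. \<forall>e2\<in>E0. w e1 \<inter> w e2 \<noteq> {} \<longrightarrow> (\<exists>i<length B. ends e1 \<union> ends e2 \<subseteq> B ! i)"
    "\<forall>e\<in>E0. nat_interval {i. i < length B \<and> ends e \<subseteq> B ! i}"
proof -
  obtain R where R: "card (reached (Suc R)) < card (explored (Suc R))" "(3/2) ^ R \<le> real (card V)"
    by (rule exists_overfull_round)
  obtain f1 f2 where "f1 \<in> explored (Suc R) - parent_edge ` (reached (Suc R) - {v})"
    "f2 \<in> explored (Suc R) - parent_edge ` (reached (Suc R) - {v})" "f1 \<noteq> f2"
    by (rule two_non_tree_edges[OF R(1)])
  then interpret core: conflict_bfs_core V E ends \<Sigma> w \<gamma> v \<beta> "Suc R" f1 f2
    by (intro conflict_bfs_core.intro conflict_bfs_axioms conflict_bfs_core_axioms.intro) auto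
  show thesis
    using core.conflicting_core_edges_share_bag core.nat_interval_core_bags core.card_core_vertices_le
    by (intro that[OF core.core_subgraph core.path_decomposition_core_bags core.pd_width_core_bags
          core.card_core_edges R(2)]) auto
qed

end

theorem corollary6:
  fixes V :: "'v set" and E :: "'e set" and ends :: "'e \<Rightarrow> 'v set"
    and \<Sigma> :: "'s set" and w :: "'e \<Rightarrow> 's set" and \<gamma> :: nat
  assumes H: "multigraph V E ends"
    and nonempty: "V \<noteq> {}"
    and mindeg: "\<forall>v\<in>V. degree E ends v \<ge> 3"
    and gamma: "\<gamma> \<ge> 1"
    and w_sub: "\<forall>e\<in>E. w e \<subseteq> \<Sigma> \<and> finite (w e) \<and> card (w e) \<le> \<gamma>"
    and w_load: "\<forall>x\<in>\<Sigma>. card {e\<in>E. x \<in> w e} \<le> \<gamma>"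
  shows "\<exists>V0 E0 B.
     subgraph V0 E0 V E ends \<and>
     path_decomposition V0 E0 ends B \<and>
     real (pd_width B) \<le> 4 * (real_of_int \<lceil>log (3/2) (12 * real \<gamma> ^ 2)\<rceil> + 3) \<and>
     card E0 = card V0 + 1 \<and>
     real (card V0) \<le> 4 * (log (3/2) (real (card V)) + 2) \<and>
     (\<forall>e1\<in>E0. \<forall>e2\<in>E0. w e1 \<inter> w e2 \<noteq> {} \<longrightarrow>
        (\<exists>i<length B. ends e1 \<union> ends e2 \<subseteq> B ! i)) \<and>
     (\<forall>e\<in>E0. nat_interval {i. i < length B \<and> ends e \<subseteq> B ! i})"
proof -
  obtain v where "v \<in> V" using nonempty by blast
  define \<beta> where "\<beta> = nat \<lceil>log (3/2) (12 * real \<gamma> ^ 2)\<rceil>"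
  have "1 \<le> real \<gamma> ^ 2" using gamma by (simp add: one_le_power)
  then have "12 * real \<gamma> ^ 2 \<le> (3/2) ^ \<beta>" and \<beta>: "real \<beta> = \<lceil>log (3/2) (12 * real \<gamma> ^ 2)\<rceil>"
    unfolding \<beta>_def by (simp_all add: nat_ceiling_log)
  then have "4 * real \<gamma> ^ 2 \<le> (3/2) ^ \<beta>" using zero_le_power2[of "real \<gamma>"] by linarith
  then interpret conflict_bfs V E ends \<Sigma> w \<gamma> v \<beta>
    using H \<open>v \<in> V\<close> mindeg w_sub w_load by unfold_locales
  obtain V0 E0 B R where core: "subgraph V0 E0 V E ends" "path_decomposition V0 E0 ends B"
    "pd_width B \<le> 4 * (\<beta> + 2)" "card E0 = card V0 + 1" "(3/2) ^ R \<le> real (card V)"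
    "card V0 \<le> 4 * R + 8"
    "\<forall>e1\<in>E0. \<forall>e2\<in>E0. w e1 \<inter> w e2 \<noteq> {} \<longrightarrow> (\<exists>i<length B. ends e1 \<union> ends e2 \<subseteq> B ! i)"
    "\<forall>e\<in>E0. nat_interval {i. i < length B \<and> ends e \<subseteq> B ! i}"
    by (rule exists_core_subgraph)
  have "real R \<le> log (3/2) (real (card V))" using le_log_of_power[OF core(5)] by simp
  moreover have "real (card V0) \<le> real (4 * R + 8)" using core(6) by (simp only: of_nat_le_iff)
  ultimately have "real (card V0) \<le> 4 * (log (3/2) (real (card V)) + 2)" by simp
  moreover have "real (pd_width B) \<le> real (4 * (\<beta> + 2))" using core(3) by (simp only: of_nat_le_iff)
  then have "real (pd_width B) \<le> 4 * (real_of_int \<lceil>log (3/2) (12 * real \<gamma> ^ 2)\<rceil> + 3)"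
    using \<beta> by simp
  ultimately show ?thesis using core by blast
qed

end
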